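(* Let $0<s\leq t$ and $0<\alpha<\frac{st}{s+t}$. A randomized BSG-$(s,t)$ algorithm which on every input of length $n$ incurs an expected cost of at most $\alpha n$ must read at least $$b\geq K_{s/(s+t)}\!\left(\frac{\alpha}{t}\right)n$$ bits of advice.
   Context: BSG-$(s,t)$ (weighted binary string guessing) is the online problem with inputs $(n,x_1,\dots,x_n)$, $x_i\in\{0,1\}$: in round $i$ the algorithm knows $n,x_1,\dots,x_{i-1}$ and outputs $y_i\in\{0,1\}$; it pays $s$ if $x_i=0,y_i=1$, pays $t$ if $x_i=1,y_i=0$, and $0$ if $y_i=x_i$; $n$ is the length. Advice is read from an infinite tape prepared by an oracle knowing the input; a randomized algorithm with advice is a probability distribution over deterministic algorithms with advice. $K_y(x)=x\log_2(x/y)+(1-x)\log_2((1-x)/(1-y))$. *)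

theory Defs
  imports "HOL-Probability.Probability"
begin

text \<open>Bits are booleans (True = 1). A deterministic BSG algorithm with advice is a function
  that, given the advice tape, the length n and the already revealed prefix
  [x_1,...,x_(i-1)], outputs the guess y_i.\<close>
type_synonym bsg_alg = "(nat \<Rightarrow> bool) \<Rightarrow> nat \<Rightarrow> bool list \<Rightarrow> bool"

definition bsg_cost :: "real \<Rightarrow> real \<Rightarrow> bsg_alg \<Rightarrow> (nat \<Rightarrow> bool) \<Rightarrow> bool list \<Rightarrow> real" where
  "bsg_cost s t D phi x =
     (\<Sum>i<length x. (let y = D phi (length x) (take i x) in
        (if \<not> x ! i \<and> y then s else if x ! i \<and> \<not> y then t else 0)))"

definition reads_at_most :: "nat \<Rightarrow> nat \<Rightarrow> bsg_alg \<Rightarrow> bool" where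
  "reads_at_most b n D \<longleftrightarrow>
     (\<forall>phi phi'. (\<forall>i<b. phi i = phi' i) \<longrightarrow>
        (\<forall>xs. length xs < n \<longrightarrow> D phi n xs = D phi' n xs))"

definition K :: "real \<Rightarrow> real \<Rightarrow> real" where
  "K y x = x * log 2 (x / y) + (1 - x) * log 2 ((1 - x) / (1 - y))"

end

theory Submission
  imports Defs
begin

text \<open>Feed the algorithm independent input bits that are 1 with probability q = s/(s+t), and
  measure its cost c through the exponential moment v powr (c/t) for some 0 < v < 1. For a
  deterministic algorithm with fixed advice this moment factorizes over the rounds, and the choice
  of q makes both possible guesses contribute a factor of at most (1 - q) + q v (for guessing 1
  this is Young's inequality), so the moment is at most ((1 - q) + q v)^n. On the other hand, by
  Jensen's inequality a randomized algorithm with expected cost at most \<alpha> n has moment at least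
  v powr (\<alpha> n / t) on every input. Only the first b advice bits matter, so summing over the
  2^b advice strings gives v powr (\<alpha> n / t) \<le> 2^b ((1 - q) + q v)^n, and taking logarithms
  with x = \<alpha>/t and v = x (1 - q) / (q (1 - x)) yields b \<ge> K q x n.\<close>

definition guess_cost :: "real \<Rightarrow> real \<Rightarrow> bool \<Rightarrow> bool \<Rightarrow> real" where
  "guess_cost s t x y = (if \<not> x \<and> y then s else if x \<and> \<not> y then t else 0)"

definition online_cost :: "real \<Rightarrow> real \<Rightarrow> (bool list \<Rightarrow> bool) \<Rightarrow> bool list \<Rightarrow> real" where
  "online_cost s t G xs = (\<Sum>i<length xs. guess_cost s t (xs ! i) (G (take i xs)))"

lemma bsg_cost_eq_online_cost: "bsg_cost s t D phi xs = online_cost s t (D phi (length xs)) xs"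
  by (simp add: bsg_cost_def online_cost_def guess_cost_def Let_def)

lemma online_cost_Cons:
  "online_cost s t G (x # xs) = guess_cost s t x (G []) + online_cost s t (\<lambda>ys. G (x # ys)) xs"
  by (simp only: online_cost_def length_Cons sum.lessThan_Suc_shift) simp

lemma online_cost_bounds:
  fixes s t :: real
  assumes "0 \<le> s" "s \<le> t"
  shows "0 \<le> online_cost s t G xs" "online_cost s t G xs \<le> length xs * t"
proof -
  have "0 \<le> guess_cost s t x y \<and> guess_cost s t x y \<le> t" for x y
    using assms by (simp add: guess_cost_def)
  then show "0 \<le> online_cost s t G xs" "online_cost s t G xs \<le> length xs * t"
    unfolding online_cost_def using sum_mono[of "{..<length xs}" _ "\<lambda>_. t"]
    by (auto intro: sum_nonneg)
qed

lemma finite_bool_lists_length: "finite {xs :: bool list. length xs = m}"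
  using finite_lists_length_eq[of "UNIV :: bool set" m] by simp

lemma card_bool_lists_length: "card {xs :: bool list. length xs = m} = 2 ^ m"
  using card_lists_length_eq[of "UNIV :: bool set" m] by simp

lemma sum_bool_lists_length_Suc:
  "(\<Sum>xs | length xs = Suc m. F xs) =
     (\<Sum>xs | length xs = m. F (True # xs)) + (\<Sum>xs | length xs = m. F (False # xs))"
proof -
  have "{xs. length xs = Suc m} = Cons True ` {xs. length xs = m} \<union> Cons False ` {xs. length xs = m}"
    by (auto simp: length_Suc_conv)
  then have "(\<Sum>xs | length xs = Suc m. F xs) =
      (\<Sum>xs\<in>Cons True ` {xs. length xs = m}. F xs) + (\<Sum>xs\<in>Cons False ` {xs. length xs = m}. F xs)"
    by (simp only:) (rule sum.union_disjoint; auto simp: finite_bool_lists_length)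
  then show ?thesis
    by (simp add: sum.reindex)
qed

definition bernoulli_weight :: "real \<Rightarrow> bool list \<Rightarrow> real" where
  "bernoulli_weight q xs = (\<Prod>x\<leftarrow>xs. if x then q else 1 - q)"

lemma bernoulli_weight_simps [simp]:
  "bernoulli_weight q [] = 1"
  "bernoulli_weight q (x # xs) = (if x then q else 1 - q) * bernoulli_weight q xs"
  by (simp_all add: bernoulli_weight_def)

lemma bernoulli_weight_nonneg: "0 \<le> q \<Longrightarrow> q \<le> 1 \<Longrightarrow> 0 \<le> bernoulli_weight q xs"
  by (induction xs) auto

lemma sum_bernoulli_weight: "(\<Sum>xs | length xs = m. bernoulli_weight q xs) = 1"
  by (induction m) (simp_all add: sum_bool_lists_length_Suc flip: sum_distrib_left)

lemma sum_bernoulli_weight_mult_online_cost_le: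
  fixes f :: "real \<Rightarrow> real" and G :: "bool list \<Rightarrow> bool"
  assumes f_add: "\<And>a c. f (a + c) = f a * f c" and f_0: "f 0 = 1" and f_nonneg: "\<And>a. 0 \<le> f a"
    and q: "0 \<le> q" "q \<le> 1"
    and guess_one: "q + (1 - q) * f s \<le> M" and guess_zero: "(1 - q) + q * f t \<le> M"
  shows "(\<Sum>xs | length xs = m. bernoulli_weight q xs * f (online_cost s t G xs)) \<le> M ^ m"
proof (induction m arbitrary: G)
  case 0
  then show ?case by (simp add: online_cost_def f_0)
next
  case (Suc m)
  let ?S = "\<lambda>G. \<Sum>xs | length xs = m. bernoulli_weight q xs * f (online_cost s t G xs)"
  let ?c = "\<lambda>x. f (guess_cost s t x (G []))"
  have M: "0 \<le> M"
    using guess_zero q f_nonneg[of t] by (smt (verit) mult_nonneg_nonneg)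
  have "(\<Sum>xs | length xs = Suc m. bernoulli_weight q xs * f (online_cost s t G xs))
      = q * ?c True * ?S (\<lambda>ys. G (True # ys)) + (1 - q) * ?c False * ?S (\<lambda>ys. G (False # ys))"
    by (simp add: sum_bool_lists_length_Suc online_cost_Cons f_add sum_distrib_left algebra_simps)
  also have "\<dots> \<le> q * ?c True * M ^ m + (1 - q) * ?c False * M ^ m"
    using q f_nonneg by (intro add_mono mult_left_mono Suc.IH) auto
  also have "\<dots> = (q * ?c True + (1 - q) * ?c False) * M ^ m"
    by (simp add: algebra_simps)
  also have "\<dots> \<le> M * M ^ m"
    using guess_one guess_zero M by (intro mult_right_mono) (auto simp: guess_cost_def f_0)
  finally show ?case by simp
qed

lemma sum_bernoulli_weight_powr_online_cost_le:
  fixes s t v :: real and G :: "bool list \<Rightarrow> bool"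
  assumes "0 < s" "s \<le> t" "0 < v"
  defines "q \<equiv> s / (s + t)"
  shows "(\<Sum>xs | length xs = m. bernoulli_weight q xs * v powr (online_cost s t G xs / t))
           \<le> ((1 - q) + q * v) ^ m"
proof (rule sum_bernoulli_weight_mult_online_cost_le)
  have q_eq: "(1 - q) * (s / t) = q"
    using assms by (simp add: q_def field_simps)
  have "v powr (s / t) * 1 powr (1 - s / t) \<le> s / t * v + (1 - s / t) * 1"
    using assms by (intro Youngs_inequality_0) auto
  then have "(1 - q) * v powr (s / t) \<le> (1 - q) * (s / t * v + (1 - s / t))"
    using assms by (intro mult_left_mono) (auto simp: q_def)
  also have "\<dots> = (1 - q) * (s / t) * v + (1 - q) - (1 - q) * (s / t)"
    by (simp add: algebra_simps)
  also have "\<dots> = q * v + (1 - q) - q"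
    unfolding q_eq ..
  finally show "q + (1 - q) * v powr (s / t) \<le> (1 - q) + q * v"
    by simp
  show "(1 - q) + q * v powr (t / t) \<le> (1 - q) + q * v"
    using assms by simp
qed (use assms in \<open>auto simp: q_def add_divide_distrib powr_add\<close>)

lemma convex_on_powr_exponent:
  assumes "0 < v"
  shows "convex_on UNIV (\<lambda>x::real. v powr x)"
proof (rule convex_on_realI)
  show "((\<lambda>x. v powr x) has_real_derivative ln v * v powr x) (at x)" for x
    using assms by (auto intro!: derivative_eq_intros)
  show "ln v * v powr x \<le> ln v * v powr y" if "x \<le> y" for x y
  proof (cases "v \<le> 1")
    case True
    then show ?thesis
      using assms that by (intro mult_left_mono_neg powr_mono') auto
  next
    case False
    then show ?thesis
      using that by (intro mult_left_mono powr_mono) auto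
  qed
qed simp

lemma powr_le_expectation_powr:
  fixes A :: "'a pmf" and X :: "'a \<Rightarrow> real"
  assumes v: "0 < v" "v \<le> 1"
    and X: "\<And>\<omega>. \<omega> \<in> set_pmf A \<Longrightarrow> 0 \<le> X \<omega> \<and> X \<omega> \<le> B"
    and "measure_pmf.expectation A X \<le> c"
  shows "v powr c \<le> measure_pmf.expectation A (\<lambda>\<omega>. v powr X \<omega>)"
proof -
  have "integrable (measure_pmf A) X"
    using X by (intro measure_pmf.integrable_const_bound[where B = B]) (auto intro!: AE_pmfI)
  moreover have "integrable (measure_pmf A) (\<lambda>\<omega>. v powr X \<omega>)"
    using X v by (intro measure_pmf.integrable_const_bound[where B = 1])
      (auto intro!: AE_pmfI powr_le1)
  ultimately have "v powr measure_pmf.expectation A X \<le> measure_pmf.expectation A (\<lambda>\<omega>. v powr X \<omega>)"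
    using convex_on_powr_exponent[OF \<open>0 < v\<close>]
    by (intro measure_pmf.jensens_inequality[where I = UNIV]) auto
  moreover have "v powr c \<le> v powr measure_pmf.expectation A X"
    using assms by (intro powr_mono') auto
  ultimately show ?thesis by linarith
qed

lemma powr_le_expectation_powr_bsg_cost:
  fixes s t v c :: real and A :: "bsg_alg pmf"
  assumes "0 \<le> s" "s \<le> t" "0 < t" "0 < v" "v \<le> 1"
    and "measure_pmf.expectation A (\<lambda>D. bsg_cost s t D phi xs) \<le> c"
  shows "v powr (c / t) \<le> measure_pmf.expectation A (\<lambda>D. v powr (bsg_cost s t D phi xs / t))"
proof (rule powr_le_expectation_powr[where X = "\<lambda>D. bsg_cost s t D phi xs / t" and B = "length xs"])
  show "0 \<le> bsg_cost s t D phi xs / t \<and> bsg_cost s t D phi xs / t \<le> length xs" for D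
    using online_cost_bounds[OF assms(1,2), of "D phi (length xs)" xs] assms(3)
    by (simp add: bsg_cost_eq_online_cost field_simps)
  show "measure_pmf.expectation A (\<lambda>D. bsg_cost s t D phi xs / t) \<le> c / t"
    using assms(3,6) by (simp add: divide_right_mono)
qed (use assms in auto)

definition advice_tape :: "bool list \<Rightarrow> nat \<Rightarrow> bool" where
  "advice_tape a i \<longleftrightarrow> i < length a \<and> a ! i"

lemma bsg_cost_advice_tape_prefix:
  assumes "reads_at_most b (length xs) D"
  shows "bsg_cost s t D (advice_tape (map phi [0..<b])) xs = bsg_cost s t D phi xs"
proof -
  have "\<forall>i<b. advice_tape (map phi [0..<b]) i = phi i"
    by (simp add: advice_tape_def)
  moreover have "length (take i xs) < length xs" if "i < length xs" for i
    using that by simp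
  ultimately have "D (advice_tape (map phi [0..<b])) (length xs) (take i xs) = D phi (length xs) (take i xs)"
    if "i < length xs" for i
    using assms that unfolding reads_at_most_def by blast
  then show ?thesis
    by (simp add: bsg_cost_def)
qed

lemma expectation_le_sum_advice_tapes:
  fixes A :: "bsg_alg pmf" and h :: "real \<Rightarrow> real"
  assumes reads: "\<forall>D \<in> set_pmf A. reads_at_most b (length xs) D" and h: "\<And>c. 0 \<le> h c"
  shows "measure_pmf.expectation A (\<lambda>D. h (bsg_cost s t D phi xs))
           \<le> (\<Sum>a | length a = b. measure_pmf.expectation A (\<lambda>D. h (bsg_cost s t D (advice_tape a) xs)))"
proof -
  let ?E = "\<lambda>a. measure_pmf.expectation A (\<lambda>D. h (bsg_cost s t D (advice_tape a) xs))"
  have "measure_pmf.expectation A (\<lambda>D. h (bsg_cost s t D phi xs)) = ?E (map phi [0..<b])"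
    using reads by (intro integral_cong_AE AE_pmfI) (simp_all add: bsg_cost_advice_tape_prefix)
  also have "\<dots> \<le> (\<Sum>a | length a = b. ?E a)"
    using h by (intro member_le_sum integral_nonneg_AE AE_pmfI) (simp_all add: finite_bool_lists_length)
  finally show ?thesis .
qed

lemma integrable_bsg_cost_comp:
  fixes s t :: real and h :: "real \<Rightarrow> real"
  assumes "0 \<le> s" "s \<le> t" "\<And>c. 0 \<le> c \<Longrightarrow> c \<le> length xs * t \<Longrightarrow> \<bar>h c\<bar> \<le> B"
  shows "integrable (measure_pmf A) (\<lambda>D. h (bsg_cost s t D phi xs))"
proof (rule measure_pmf.integrable_const_bound[where B = B])
  show "AE D in measure_pmf A. norm (h (bsg_cost s t D phi xs)) \<le> B"
  proof (rule AE_pmfI)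
    fix D
    show "norm (h (bsg_cost s t D phi xs)) \<le> B"
      using assms(3) online_cost_bounds[OF assms(1,2), of "D phi (length xs)" xs]
      by (simp add: bsg_cost_eq_online_cost)
  qed
qed simp

lemma advice_bernoulli_averaging:
  fixes A :: "bsg_alg pmf" and h :: "real \<Rightarrow> real" and s t q :: real
  assumes reads: "\<forall>D \<in> set_pmf A. reads_at_most b n D"
    and st: "0 \<le> s" "s \<le> t" and q: "0 \<le> q" "q \<le> 1"
    and h: "\<And>c. 0 \<le> h c" "\<And>c. 0 \<le> c \<Longrightarrow> h c \<le> B"
    and deterministic:
      "\<And>G. (\<Sum>xs | length xs = n. bernoulli_weight q xs * h (online_cost s t G xs)) \<le> \<beta>"
    and randomized:
      "\<And>xs. length xs = n \<Longrightarrow> \<exists>phi. \<gamma> \<le> measure_pmf.expectation A (\<lambda>D. h (bsg_cost s t D phi xs))"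
  shows "\<gamma> \<le> 2 ^ b * \<beta>"
proof -
  let ?X = "{xs :: bool list. length xs = n}" and ?T = "{a :: bool list. length a = b}"
  let ?h = "\<lambda>a xs D. h (bsg_cost s t D (advice_tape a) xs)"
  have integrable: "integrable (measure_pmf A) (?h a xs)" for a xs
    using st h by (intro integrable_bsg_cost_comp[where B = B]) auto
  have single_input: "\<gamma> \<le> (\<Sum>a\<in>?T. measure_pmf.expectation A (?h a xs))" if xs: "xs \<in> ?X" for xs
  proof -
    obtain phi where "\<gamma> \<le> measure_pmf.expectation A (\<lambda>D. h (bsg_cost s t D phi xs))"
      using randomized xs by blast
    also have "\<dots> \<le> (\<Sum>a\<in>?T. measure_pmf.expectation A (?h a xs))"
      using reads xs h by (intro expectation_le_sum_advice_tapes) auto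
    finally show ?thesis .
  qed
  have "\<gamma> = (\<Sum>xs\<in>?X. bernoulli_weight q xs * \<gamma>)"
    by (simp add: sum_bernoulli_weight flip: sum_distrib_right)
  also have "\<dots> \<le> (\<Sum>xs\<in>?X. bernoulli_weight q xs * (\<Sum>a\<in>?T. measure_pmf.expectation A (?h a xs)))"
    using single_input q bernoulli_weight_nonneg by (intro sum_mono mult_left_mono) auto
  also have "\<dots> = (\<Sum>a\<in>?T. measure_pmf.expectation A (\<lambda>D. \<Sum>xs\<in>?X. bernoulli_weight q xs * ?h a xs D))"
    using integrable by (simp add: sum_distrib_left sum.swap[of _ ?X] integral_sum)
  also have "\<dots> \<le> (\<Sum>a\<in>?T. \<beta>)"
  proof (intro sum_mono measure_pmf.integral_le_const AE_pmfI)
    fix a D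
    have "(\<Sum>xs\<in>?X. bernoulli_weight q xs * ?h a xs D)
        = (\<Sum>xs\<in>?X. bernoulli_weight q xs * h (online_cost s t (D (advice_tape a) n) xs))"
      by (intro sum.cong) (simp_all add: bsg_cost_eq_online_cost)
    also have "\<dots> \<le> \<beta>"
      by (rule deterministic)
    finally show "(\<Sum>xs\<in>?X. bernoulli_weight q xs * ?h a xs D) \<le> \<beta>" .
  qed (use integrable in auto)
  also have "\<dots> = 2 ^ b * \<beta>"
    by (simp add: card_bool_lists_length)
  finally show ?thesis .
qed

lemma K_mult_le_of_powr_le:
  fixes x q :: real and n b :: nat
  assumes x: "0 < x" "x < q" and q: "q < 1"
  defines "v \<equiv> x * (1 - q) / (q * (1 - x))"
  assumes bound: "v powr (x * n) \<le> 2 ^ b * ((1 - q) + q * v) ^ n"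
  shows "K q x * n \<le> b"
proof -
  have M: "(1 - q) + q * v = (1 - q) / (1 - x)"
    using x q by (simp add: v_def field_simps)
  have moment: "x * n * ln v \<le> b * ln 2 + n * ln ((1 - q) / (1 - x))"
    using bound x q unfolding M
    by (subst (asm) ln_le_cancel_iff[symmetric]) (auto simp: v_def ln_powr ln_mult ln_realpow)
  have ln_v: "ln v = ln x + ln (1 - q) - ln q - ln (1 - x)"
    using x q by (simp add: v_def ln_div ln_mult)
  have "K q x * ln 2 = x * ln v - ln ((1 - q) / (1 - x))"
    using x q unfolding K_def log_def ln_v by (simp add: ln_div field_simps)
  then have "K q x * n * ln 2 = n * (x * ln v - ln ((1 - q) / (1 - x)))"
    by (metis mult.commute mult.left_commute)
  also have "\<dots> \<le> b * ln 2"
    using moment by (simp add: algebra_simps)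
  finally show ?thesis
    by simp
qed

theorem theorem13:
  fixes s t \<alpha> :: real and n b :: nat and A :: "bsg_alg pmf"
  assumes "0 < s" and "s \<le> t" and "0 < \<alpha>" and "\<alpha> < s * t / (s + t)"
    and "\<forall>D \<in> set_pmf A. reads_at_most b n D"
    and "\<forall>x. length x = n \<longrightarrow>
           (\<exists>phi. measure_pmf.expectation A (\<lambda>D. bsg_cost s t D phi x) \<le> \<alpha> * real n)"
  shows "real b \<ge> K (s / (s + t)) (\<alpha> / t) * real n"
proof -
  define q where "q = s / (s + t)"
  define x where "x = \<alpha> / t"
  define v where "v = x * (1 - q) / (q * (1 - x))"
  have t: "0 < t"
    using assms by linarith
  have q: "0 < q" "q < 1" and x: "0 < x" "x < q"
    using assms t by (auto simp: q_def x_def field_simps)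
  have v: "0 < v" "v \<le> 1"
    using q x by (auto simp: v_def field_simps)
  have "v powr (\<alpha> * n / t) \<le> 2 ^ b * ((1 - q) + q * v) ^ n"
  proof (rule advice_bernoulli_averaging[where A = A and n = n and s = s and t = t and q = q
        and h = "\<lambda>c. v powr (c / t)" and B = 1])
    show "(\<Sum>xs | length xs = n. bernoulli_weight q xs * v powr (online_cost s t G xs / t))
            \<le> ((1 - q) + q * v) ^ n" for G
      using assms v unfolding q_def by (intro sum_bernoulli_weight_powr_online_cost_le) auto
    show "\<exists>phi. v powr (\<alpha> * n / t) \<le> measure_pmf.expectation A (\<lambda>D. v powr (bsg_cost s t D phi xs / t))"
      if xs: "length xs = n" for xs
    proof -
      obtain phi where "measure_pmf.expectation A (\<lambda>D. bsg_cost s t D phi xs) \<le> \<alpha> * n"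
        using assms(6) xs by blast
      then show ?thesis
        using assms(1,2) t v by (intro exI[of _ phi] powr_le_expectation_powr_bsg_cost) auto
    qed
  qed (use assms q v in \<open>auto intro: powr_le1\<close>)
  then show ?thesis
    using K_mult_le_of_powr_le[of x q n b] q x by (simp add: v_def q_def x_def)
qed

end
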